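(* Let $\boldsymbol{x}=\{x_1,\dots,x_n\}$, let $\mathcal F_c(\boldsymbol{x})$ be the free commutative loop on $\boldsymbol{x}$, let $L$ be a commutative loop with identity $1$, let $\alpha\colon\mathcal F_c(\boldsymbol{x})\to L$ be a surjective homomorphism, and let $A$, $(L,A)$, $\delta$, $\psi$ and reduced words be as in the context. Let $w,w'\in W(\boldsymbol{x})$ be reduced words such that (i) $w'\notin\mathrm{Comp}(w)$; (ii) $\alpha(w)=\alpha(w')$; (iii) whenever $u,v\in\mathrm{Comp}(w)\cup\mathrm{Comp}(w')$ satisfy $\alpha(u)=\alpha(v)$, either $u=v$ or $\{u,v\}=\{w,w'\}$. Then there exists a free generator of $A$ (either some $x_i$ or some $\langle l_1,l_2\rangle$) whose coefficient in $\psi(w)$ is $0$ and whose coefficient in $\psi(w')$ is $\pm1$.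
   Context: Words: $W(\boldsymbol{x})$ is the set of formal expressions defined recursively to contain $e$ and every $x_i$, and, with $u,v$, the expressions $uv$, $u\backslash v$, $u/v$ (the free algebra on $\boldsymbol{x}$ with one nullary and three binary operations). Components: $\mathrm{Comp}(e)=\{e\}$, $\mathrm{Comp}(x_i)=\{e,x_i\}$, and $\mathrm{Comp}(w)=\mathrm{Comp}(u)\cup\mathrm{Comp}(v)\cup\{w\}$ if $w$ is $uv$, $u\backslash v$ or $u/v$. Fix a total order $<$ on $W(\boldsymbol{x})$. A word is reduced if none of its components is of one of the forms: $uv$ with $u<v$; $u/v$; $(v\backslash u)\backslash u$; $v\backslash(uv)$; $u\backslash(uv)$; $(u\backslash v)u$; $ev$; $u(u\backslash v)$; $e\backslash v$; $ue$; $v\backslash v$. Each word $w$ determines an element of $\mathcal F_c(\boldsymbol{x})$ (interpreting $e$ as the identity, and $\backslash,/$ as left and right division $a\backslash b=L_a^{-1}b$, $b/a=R_a^{-1}b$), and $\alpha(w)$, $\psi(w)$ refer to this element. Let $A$ be the free abelian group with free generators the symbols $x_1,\dots,x_n$ and the symbols $\langle l_1,l_2\rangle$ for $l_1,l_2\in L\setminus\{1\}$, where $\langle l_1,l_2\rangle=\langle l_2,l_1\rangle$; set $\langle l,1\rangle=\langle1,l\rangle=0$. Let $(L,A)$ be the set $L\times A$ with product $(l_1,a_1)(l_2,a_2)=(l_1l_2,\,a_1+a_2+\langle l_1,l_2\rangle)$, a commutative loop. Let $\delta\colon\mathcal F_c(\boldsymbol{x})\to(L,A)$ be the homomorphism with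 $\delta(x_i)=(\alpha(x_i),x_i)$; then $\delta(w)=(\alpha(w),\psi(w))$, which defines $\psi\colon\mathcal F_c(\boldsymbol{x})\to A$. *)

theory Defs
  imports Main "HOL-Library.Uprod"
begin

datatype word = E | Var nat | Mul word word | LDiv word word | RDiv word word
  (* Mul u v = uv,  LDiv u v = u\v,  RDiv u v = u/v *)

fun vars :: "word \<Rightarrow> nat set" where
  "vars E = {}"
| "vars (Var i) = {i}"
| "vars (Mul u v) = vars u \<union> vars v"
| "vars (LDiv u v) = vars u \<union> vars v"
| "vars (RDiv u v) = vars u \<union> vars v"

definition words_over :: "nat \<Rightarrow> word set" where
  "words_over n = {w. vars w \<subseteq> {1..n}}"

fun Comp :: "word \<Rightarrow> word set" where
  "Comp E = {E}"
| "Comp (Var i) = {E, Var i}"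
| "Comp (Mul u v) = Comp u \<union> Comp v \<union> {Mul u v}"
| "Comp (LDiv u v) = Comp u \<union> Comp v \<union> {LDiv u v}"
| "Comp (RDiv u v) = Comp u \<union> Comp v \<union> {RDiv u v}"

definition strict_total_order_on :: "word set \<Rightarrow> (word \<Rightarrow> word \<Rightarrow> bool) \<Rightarrow> bool" where
  "strict_total_order_on S lt \<longleftrightarrow>
     (\<forall>u\<in>S. \<not> lt u u) \<and>
     (\<forall>u\<in>S. \<forall>v\<in>S. \<forall>z\<in>S. lt u v \<longrightarrow> lt v z \<longrightarrow> lt u z) \<and>
     (\<forall>u\<in>S. \<forall>v\<in>S. u \<noteq> v \<longrightarrow> lt u v \<or> lt v u)"

definition forbidden :: "(word \<Rightarrow> word \<Rightarrow> bool) \<Rightarrow> word \<Rightarrow> bool" where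
  "forbidden lt c \<longleftrightarrow>
     (\<exists>u v. c = Mul u v \<and> lt u v) \<or>
     (\<exists>u v. c = RDiv u v) \<or>
     (\<exists>u v. c = LDiv (LDiv v u) u) \<or>
     (\<exists>u v. c = LDiv v (Mul u v)) \<or>
     (\<exists>u v. c = LDiv u (Mul u v)) \<or>
     (\<exists>u v. c = Mul (LDiv u v) u) \<or>
     (\<exists>v. c = Mul E v) \<or>
     (\<exists>u v. c = Mul u (LDiv u v)) \<or>
     (\<exists>v. c = LDiv E v) \<or>
     (\<exists>u. c = Mul u E) \<or>
     (\<exists>v. c = LDiv v v)"

definition reduced :: "(word \<Rightarrow> word \<Rightarrow> bool) \<Rightarrow> word \<Rightarrow> bool" where
  "reduced lt w \<longleftrightarrow> (\<forall>c\<in>Comp w. \<not> forbidden lt c)"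

definition comm_loop :: "'l set \<Rightarrow> ('l \<Rightarrow> 'l \<Rightarrow> 'l) \<Rightarrow> 'l \<Rightarrow> bool" where
  "comm_loop C m one \<longleftrightarrow>
     one \<in> C \<and>
     (\<forall>a\<in>C. \<forall>b\<in>C. m a b \<in> C) \<and>
     (\<forall>a\<in>C. m one a = a \<and> m a one = a) \<and>
     (\<forall>a\<in>C. \<forall>b\<in>C. \<exists>!x. x \<in> C \<and> m a x = b) \<and>
     (\<forall>a\<in>C. \<forall>b\<in>C. \<exists>!y. y \<in> C \<and> m y a = b) \<and>
     (\<forall>a\<in>C. \<forall>b\<in>C. m a b = m b a)"

definition ldiv :: "'l set \<Rightarrow> ('l \<Rightarrow> 'l \<Rightarrow> 'l) \<Rightarrow> 'l \<Rightarrow> 'l \<Rightarrow> 'l" where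
  "ldiv C m a b = (THE x. x \<in> C \<and> m a x = b)"

definition rdiv :: "'l set \<Rightarrow> ('l \<Rightarrow> 'l \<Rightarrow> 'l) \<Rightarrow> 'l \<Rightarrow> 'l \<Rightarrow> 'l" where
  "rdiv C m b a = (THE y. y \<in> C \<and> m y a = b)"

fun eval :: "'l set \<Rightarrow> ('l \<Rightarrow> 'l \<Rightarrow> 'l) \<Rightarrow> 'l \<Rightarrow> (nat \<Rightarrow> 'l) \<Rightarrow> word \<Rightarrow> 'l" where
  "eval C m one g E = one"
| "eval C m one g (Var i) = g i"
| "eval C m one g (Mul u v) = m (eval C m one g u) (eval C m one g v)"
| "eval C m one g (LDiv u v) = ldiv C m (eval C m one g u) (eval C m one g v)"
| "eval C m one g (RDiv u v) = rdiv C m (eval C m one g u) (eval C m one g v)"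

text \<open>Free generators of A: the symbols x_i (i = 1..n) and <l1,l2> (unordered, l1,l2 in L - {1}).\<close>
datatype 'l gen = GX nat | GP "'l uprod"

definition valid_gen :: "nat \<Rightarrow> 'l set \<Rightarrow> 'l \<Rightarrow> 'l gen \<Rightarrow> bool" where
  "valid_gen n C one g \<longleftrightarrow>
     (\<exists>i. 1 \<le> i \<and> i \<le> n \<and> g = GX i) \<or>
     (\<exists>l1 l2. l1 \<in> C - {one} \<and> l2 \<in> C - {one} \<and> g = GP (Upair l1 l2))"

definition A_carrier :: "nat \<Rightarrow> 'l set \<Rightarrow> 'l \<Rightarrow> ('l gen \<Rightarrow> int) set" where
  "A_carrier n C one = {f. finite {g. f g \<noteq> 0} \<and> (\<forall>g. f g \<noteq> 0 \<longrightarrow> valid_gen n C one g)}"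

definition basis :: "'l gen \<Rightarrow> ('l gen \<Rightarrow> int)" where
  "basis g = (\<lambda>h. if h = g then 1 else 0)"

definition bracket :: "'l \<Rightarrow> 'l \<Rightarrow> 'l \<Rightarrow> ('l gen \<Rightarrow> int)" where
  "bracket one l1 l2 = (if l1 = one \<or> l2 = one then (\<lambda>_. 0) else basis (GP (Upair l1 l2)))"

definition LA_carrier :: "nat \<Rightarrow> 'l set \<Rightarrow> 'l \<Rightarrow> ('l \<times> ('l gen \<Rightarrow> int)) set" where
  "LA_carrier n C one = C \<times> A_carrier n C one"

definition LA_mult :: "('l \<Rightarrow> 'l \<Rightarrow> 'l) \<Rightarrow> 'l \<Rightarrow>
    ('l \<times> ('l gen \<Rightarrow> int)) \<Rightarrow> ('l \<times> ('l gen \<Rightarrow> int)) \<Rightarrow> ('l \<times> ('l gen \<Rightarrow> int))" where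
  "LA_mult m one p q =
     (m (fst p) (fst q), (\<lambda>g. snd p g + snd q g + bracket one (fst p) (fst q) g))"

definition LA_one :: "'l \<Rightarrow> ('l \<times> ('l gen \<Rightarrow> int))" where
  "LA_one one = (one, (\<lambda>_. 0))"

text \<open>delta(w) = value of w in (L,A) with x_i |-> (alpha(x_i), x_i); psi(w) = its A-component.
  Here a i = alpha(x_i).\<close>
definition delta :: "nat \<Rightarrow> 'l set \<Rightarrow> ('l \<Rightarrow> 'l \<Rightarrow> 'l) \<Rightarrow> 'l \<Rightarrow> (nat \<Rightarrow> 'l) \<Rightarrow> word
    \<Rightarrow> 'l \<times> ('l gen \<Rightarrow> int)" where
  "delta n C m one a w =
     eval (LA_carrier n C one) (LA_mult m one) (LA_one one) (\<lambda>i. (a i, basis (GX i))) w"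

definition psi :: "nat \<Rightarrow> 'l set \<Rightarrow> ('l \<Rightarrow> 'l \<Rightarrow> 'l) \<Rightarrow> 'l \<Rightarrow> (nat \<Rightarrow> 'l) \<Rightarrow> word
    \<Rightarrow> ('l gen \<Rightarrow> int)" where
  "psi n C m one a w = snd (delta n C m one a w)"

end

theory Submission
  imports Defs
begin

text \<open>
  Let P consist of the components of w and w' other than w' itself; by (iii) \<alpha> is injective on P.
  Reduced words contain no right division, and the recursion for \<psi> shows that \<psi>(t) collects one
  contribution per node of t: x_j for a node x_j, \<langle>\<alpha> p, \<alpha> q\<rangle> for a node pq, and
  -\<langle>\<alpha> p, \<alpha>(p\<setminus>q)\<rangle> for a node p\<setminus>q. Take g to be the contribution of the top node of w',
  i.e. x_k, \<langle>\<alpha> u, \<alpha> v\<rangle> or \<langle>\<alpha> u, \<alpha> w\<rangle> according as w' is x_k, uv or u\<setminus>v. Injectivity of \<alpha> on P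
  together with the forbidden shapes of reduced words shows that no node in P contributes g.
  Hence \<psi> vanishes at g on P, which contains w and the arguments of w', and \<psi>(w') has
  coefficient \<plusminus>1 at g.
\<close>

lemma Comp_self: "t \<in> Comp t"
  by (cases t) auto

lemma E_in_Comp: "E \<in> Comp t"
  by (induction t) auto

lemma Comp_subset: "c \<in> Comp t \<Longrightarrow> Comp c \<subseteq> Comp t"
  by (induction t) auto

lemma Comp_size: "c \<in> Comp t \<Longrightarrow> size c \<le> size t"
  by (induction t) auto

lemma Comp_proper_size: "c \<in> Comp t \<Longrightarrow> c \<noteq> t \<Longrightarrow> c = E \<or> size c < size t"
  by (induction t) (auto dest: Comp_size)

lemma Comp_antisym: "c \<in> Comp t \<Longrightarrow> t \<in> Comp c \<Longrightarrow> c = t"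
  using Comp_proper_size Comp_size by (metis Comp.simps(1) not_le singletonD)

lemma vars_Comp: "c \<in> Comp t \<Longrightarrow> vars c \<subseteq> vars t"
  by (induction t) auto

lemma reduced_Comp: "reduced lt t \<Longrightarrow> c \<in> Comp t \<Longrightarrow> reduced lt c"
  unfolding reduced_def using Comp_subset by blast

lemma reduced_not_forbidden: "reduced lt t \<Longrightarrow> \<not> forbidden lt t"
  unfolding reduced_def using Comp_self by blast

fun rdiv_free :: "word \<Rightarrow> bool" where
  "rdiv_free (Mul u v) \<longleftrightarrow> rdiv_free u \<and> rdiv_free v"
| "rdiv_free (LDiv u v) \<longleftrightarrow> rdiv_free u \<and> rdiv_free v"
| "rdiv_free (RDiv u v) \<longleftrightarrow> False"
| "rdiv_free _ \<longleftrightarrow> True"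

lemma reduced_subterms:
  "reduced lt (Mul u v) \<Longrightarrow> reduced lt u \<and> reduced lt v"
  "reduced lt (LDiv u v) \<Longrightarrow> reduced lt u \<and> reduced lt v"
  by (simp_all add: reduced_def)

lemma reduced_rdiv_free: "reduced lt t \<Longrightarrow> rdiv_free t"
proof (induction t)
  case (RDiv u v)
  then show ?case using reduced_not_forbidden unfolding forbidden_def by blast
qed (auto dest: reduced_subterms)

lemma reduced_Mul_swap:
  assumes "strict_total_order_on S lt" and "u \<in> S" and "v \<in> S"
    and "reduced lt (Mul u v)" and "reduced lt (Mul v u)"
  shows "u = v"
proof -
  have "\<not> forbidden lt (Mul u v)" and "\<not> forbidden lt (Mul v u)"
    using assms(4,5) by (simp_all add: reduced_not_forbidden)
  then have "\<not> lt u v" and "\<not> lt v u" by (simp_all add: forbidden_def)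
  then show ?thesis using assms(1-3) unfolding strict_total_order_on_def by blast
qed

lemma Upair_inj_on:
  assumes "inj_on f A" and "{x, y, x', y'} \<subseteq> A"
    and "Upair (f x) (f y) = Upair (f x') (f y')"
  shows "Upair x y = Upair x' y'"
  using assms by (auto simp: inj_on_def)

lemma bracket_support:
  "bracket one x y g \<noteq> 0 \<longleftrightarrow> x \<noteq> one \<and> y \<noteq> one \<and> g = GP (Upair x y)"
  unfolding bracket_def basis_def by auto

lemma bracket_at_own_generator:
  "x \<noteq> one \<Longrightarrow> y \<noteq> one \<Longrightarrow> bracket one x y (GP (Upair x y)) = 1"
  unfolding bracket_def basis_def by simp

lemma zero_in_A_carrier: "(\<lambda>_. 0) \<in> A_carrier n C one"
  unfolding A_carrier_def by auto

lemma basis_in_A_carrier: "1 \<le> i \<Longrightarrow> i \<le> n \<Longrightarrow> basis (GX i) \<in> A_carrier n C one"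
  unfolding A_carrier_def basis_def valid_gen_def by auto

lemma bracket_in_A_carrier: "x \<in> C \<Longrightarrow> y \<in> C \<Longrightarrow> bracket one x y \<in> A_carrier n C one"
  unfolding A_carrier_def bracket_def basis_def valid_gen_def by auto

lemma add_in_A_carrier:
  assumes "f \<in> A_carrier n C one" and "h \<in> A_carrier n C one"
  shows "(\<lambda>g. f g + h g) \<in> A_carrier n C one"
proof -
  have "{g. f g + h g \<noteq> 0} \<subseteq> {g. f g \<noteq> 0} \<union> {g. h g \<noteq> 0}" by auto
  then show ?thesis using assms unfolding A_carrier_def by (auto intro: finite_subset)
qed

lemma uminus_in_A_carrier: "f \<in> A_carrier n C one \<Longrightarrow> (\<lambda>g. - f g) \<in> A_carrier n C one"
  unfolding A_carrier_def by auto

locale commutative_loop =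
  fixes C :: "'l set" and m :: "'l \<Rightarrow> 'l \<Rightarrow> 'l" and one :: 'l
  assumes comm_loop: "comm_loop C m one"
begin

lemma one_closed: "one \<in> C"
  and mult_closed: "x \<in> C \<Longrightarrow> y \<in> C \<Longrightarrow> m x y \<in> C"
  and mult_one_right: "x \<in> C \<Longrightarrow> m x one = x"
  and mult_commute: "x \<in> C \<Longrightarrow> y \<in> C \<Longrightarrow> m x y = m y x"
  and ex1_ldiv: "x \<in> C \<Longrightarrow> y \<in> C \<Longrightarrow> \<exists>!z. z \<in> C \<and> m x z = y"
  and ex1_rdiv: "x \<in> C \<Longrightarrow> y \<in> C \<Longrightarrow> \<exists>!z. z \<in> C \<and> m z x = y"
  using comm_loop unfolding comm_loop_def by simp_all

lemma ldiv_closed_mult_ldiv: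
  "x \<in> C \<Longrightarrow> y \<in> C \<Longrightarrow> ldiv C m x y \<in> C \<and> m x (ldiv C m x y) = y"
  unfolding ldiv_def by (rule theI'[OF ex1_ldiv])

lemma ldiv_eqI: "x \<in> C \<Longrightarrow> y \<in> C \<Longrightarrow> z \<in> C \<Longrightarrow> m x z = y \<Longrightarrow> ldiv C m x y = z"
  unfolding ldiv_def by (rule the1_equality[OF ex1_ldiv]) simp_all

lemma rdiv_closed: "x \<in> C \<Longrightarrow> y \<in> C \<Longrightarrow> rdiv C m y x \<in> C"
  unfolding rdiv_def by (rule theI'[OF ex1_rdiv, THEN conjunct1])

lemma LA_mult_closed:
  assumes "p \<in> LA_carrier n C one" and "q \<in> LA_carrier n C one"
  shows "LA_mult m one p q \<in> LA_carrier n C one"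
proof -
  have "(\<lambda>g. snd p g + snd q g + bracket one (fst p) (fst q) g) \<in> A_carrier n C one"
    using assms unfolding LA_carrier_def
    by (intro add_in_A_carrier bracket_in_A_carrier) auto
  then show ?thesis using assms mult_closed unfolding LA_carrier_def LA_mult_def by auto
qed

definition LA_ldiv_value ::
    "'l \<times> ('l gen \<Rightarrow> int) \<Rightarrow> 'l \<times> ('l gen \<Rightarrow> int) \<Rightarrow> 'l \<times> ('l gen \<Rightarrow> int)" where
  "LA_ldiv_value p q = (ldiv C m (fst p) (fst q),
     \<lambda>g. snd q g - snd p g - bracket one (fst p) (ldiv C m (fst p) (fst q)) g)"

lemma LA_ldiv_value_closed:
  assumes "p \<in> LA_carrier n C one" and "q \<in> LA_carrier n C one"
  shows "LA_ldiv_value p q \<in> LA_carrier n C one"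
proof -
  have p: "fst p \<in> C" "snd p \<in> A_carrier n C one" and q: "fst q \<in> C" "snd q \<in> A_carrier n C one"
    using assms unfolding LA_carrier_def by auto
  then have "ldiv C m (fst p) (fst q) \<in> C" using ldiv_closed_mult_ldiv by blast
  then have "(\<lambda>g. snd q g + - snd p g + - bracket one (fst p) (ldiv C m (fst p) (fst q)) g)
      \<in> A_carrier n C one"
    by (intro add_in_A_carrier uminus_in_A_carrier bracket_in_A_carrier p q)
  with \<open>ldiv C m (fst p) (fst q) \<in> C\<close> show ?thesis
    unfolding LA_carrier_def LA_ldiv_value_def by simp
qed

lemma LA_ldiv:
  assumes "p \<in> LA_carrier n C one" and "q \<in> LA_carrier n C one"
  shows "ldiv (LA_carrier n C one) (LA_mult m one) p q = LA_ldiv_value p q"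
proof (unfold ldiv_def[of "LA_carrier n C one"], rule the_equality)
  have p: "fst p \<in> C" and q: "fst q \<in> C"
    using assms unfolding LA_carrier_def by auto
  then have "m (fst p) (ldiv C m (fst p) (fst q)) = fst q"
    using ldiv_closed_mult_ldiv by blast
  then show "LA_ldiv_value p q \<in> LA_carrier n C one \<and> LA_mult m one p (LA_ldiv_value p q) = q"
    using LA_ldiv_value_closed[OF assms] unfolding LA_mult_def LA_ldiv_value_def by (simp add: prod_eq_iff)
  fix z assume z: "z \<in> LA_carrier n C one \<and> LA_mult m one p z = q"
  then have "fst z \<in> C" and "m (fst p) (fst z) = fst q"
    unfolding LA_carrier_def LA_mult_def by auto
  then have "fst z = ldiv C m (fst p) (fst q)" using ldiv_eqI p q by metis
  moreover have "snd p g + snd z g + bracket one (fst p) (fst z) g = snd q g" for g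
    using z unfolding LA_mult_def by auto
  ultimately show "z = LA_ldiv_value p q"
    unfolding LA_ldiv_value_def by (simp add: prod_eq_iff fun_eq_iff algebra_simps)
qed

end

fun node_gens :: "(word \<Rightarrow> 'l) \<Rightarrow> 'l \<Rightarrow> word \<Rightarrow> 'l gen set" where
  "node_gens \<alpha> one (Var j) = {GX j}"
| "node_gens \<alpha> one (Mul p q) = {g. bracket one (\<alpha> p) (\<alpha> q) g \<noteq> 0}"
| "node_gens \<alpha> one (LDiv p q) = {g. bracket one (\<alpha> p) (\<alpha> (LDiv p q)) g \<noteq> 0}"
| "node_gens \<alpha> one _ = {}"

locale loop_assignment = commutative_loop C m one
  for C :: "'l set" and m :: "'l \<Rightarrow> 'l \<Rightarrow> 'l" and one :: 'l +
  fixes n :: nat and a :: "nat \<Rightarrow> 'l"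
  assumes a_in: "\<forall>i\<in>{1..n}. a i \<in> C"
begin

abbreviation \<alpha> :: "word \<Rightarrow> 'l" where "\<alpha> \<equiv> eval C m one a"
abbreviation \<delta> :: "word \<Rightarrow> 'l \<times> ('l gen \<Rightarrow> int)" where "\<delta> \<equiv> delta n C m one a"
abbreviation \<psi> :: "word \<Rightarrow> 'l gen \<Rightarrow> int" where "\<psi> \<equiv> psi n C m one a"

lemma eval_closed: "vars t \<subseteq> {1..n} \<Longrightarrow> \<alpha> t \<in> C"
  by (induction t) (simp_all add: one_closed a_in mult_closed ldiv_closed_mult_ldiv rdiv_closed)

lemma mult_eval_LDiv: "vars (LDiv p q) \<subseteq> {1..n} \<Longrightarrow> m (\<alpha> p) (\<alpha> (LDiv p q)) = \<alpha> q"
  using eval_closed ldiv_closed_mult_ldiv by simp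

lemma delta_in_LA_carrier:
  "vars t \<subseteq> {1..n} \<Longrightarrow> rdiv_free t \<Longrightarrow> \<delta> t \<in> LA_carrier n C one \<and> fst (\<delta> t) = \<alpha> t"
proof (induction t)
  case E
  then show ?case by (simp add: delta_def LA_one_def LA_carrier_def one_closed zero_in_A_carrier)
next
  case (Var i)
  then show ?case by (simp add: delta_def LA_carrier_def a_in basis_in_A_carrier)
next
  case (Mul u v)
  have eq: "\<delta> (Mul u v) = LA_mult m one (\<delta> u) (\<delta> v)" by (simp add: delta_def)
  then have "\<delta> (Mul u v) \<in> LA_carrier n C one" using Mul LA_mult_closed by simp
  with eq Mul show ?case by (simp add: LA_mult_def)
next
  case (LDiv u v)
  have eq: "\<delta> (LDiv u v) = LA_ldiv_value (\<delta> u) (\<delta> v)"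
    using LDiv LA_ldiv by (simp add: delta_def)
  then have "\<delta> (LDiv u v) \<in> LA_carrier n C one" using LDiv LA_ldiv_value_closed by simp
  with eq LDiv show ?case by (simp add: LA_ldiv_value_def)
qed simp

lemma psi_Var: "\<psi> (Var i) = basis (GX i)"
  unfolding psi_def delta_def by simp

lemma psi_Mul:
  assumes "vars (Mul u v) \<subseteq> {1..n}" and "rdiv_free (Mul u v)"
  shows "\<psi> (Mul u v) g = \<psi> u g + \<psi> v g + bracket one (\<alpha> u) (\<alpha> v) g"
  using assms delta_in_LA_carrier[of u] delta_in_LA_carrier[of v]
  unfolding psi_def by (simp add: delta_def LA_mult_def)

lemma psi_LDiv:
  assumes "vars (LDiv u v) \<subseteq> {1..n}" and "rdiv_free (LDiv u v)"
  shows "\<psi> (LDiv u v) g = \<psi> v g - \<psi> u g - bracket one (\<alpha> u) (\<alpha> (LDiv u v)) g"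
proof -
  have "\<delta> (LDiv u v) = ldiv (LA_carrier n C one) (LA_mult m one) (\<delta> u) (\<delta> v)" by (simp add: delta_def)
  then show ?thesis
    using assms delta_in_LA_carrier[of u] delta_in_LA_carrier[of v] LA_ldiv
    unfolding psi_def by (simp add: LA_ldiv_value_def)
qed

lemma psi_vanishes:
  "vars t \<subseteq> {1..n} \<Longrightarrow> rdiv_free t \<Longrightarrow> (\<forall>c\<in>Comp t. g \<notin> node_gens \<alpha> one c) \<Longrightarrow>
   \<psi> t g = 0"
proof (induction t)
  case E
  then show ?case by (simp add: psi_def delta_def LA_one_def)
next
  case (Var i)
  then show ?case by (simp add: psi_Var basis_def)
next
  case (Mul u v)
  then show ?case by (simp add: psi_Mul)
next
  case (LDiv u v)
  then show ?case by (simp add: psi_LDiv)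
qed simp

end

locale reduced_pair = loop_assignment C m one n a
  for C :: "'l set" and m :: "'l \<Rightarrow> 'l \<Rightarrow> 'l" and one :: 'l
    and n :: nat and a :: "nat \<Rightarrow> 'l" +
  fixes lt :: "word \<Rightarrow> word \<Rightarrow> bool" and w w' :: word
  assumes order: "strict_total_order_on (words_over n) lt"
    and w_words: "w \<in> words_over n" and w'_words: "w' \<in> words_over n"
    and w_reduced: "reduced lt w" and w'_reduced: "reduced lt w'"
    and w'_notin_Comp: "w' \<notin> Comp w"
    and same_value: "\<alpha> w = \<alpha> w'"
    and only_collision: "\<forall>u\<in>Comp w \<union> Comp w'. \<forall>v\<in>Comp w \<union> Comp w'.
                \<alpha> u = \<alpha> v \<longrightarrow> u = v \<or> {u, v} = {w, w'}"
begin

definition comps_except_w' :: "word set" where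
  "comps_except_w' = Comp w \<union> (Comp w' - {w'})"

definition separates :: "'l gen \<Rightarrow> bool" where
  "separates g \<longleftrightarrow> valid_gen n C one g \<and> \<psi> w g = 0 \<and> \<bar>\<psi> w' g\<bar> = 1"

lemma w_in_comps: "w \<in> comps_except_w'"
  and E_in_comps: "E \<in> comps_except_w'"
  and w'_notin_comps: "w' \<notin> comps_except_w'"
  and proper_Comp_in_comps: "c \<in> Comp w' \<Longrightarrow> c \<noteq> w' \<Longrightarrow> c \<in> comps_except_w'"
  unfolding comps_except_w'_def using Comp_self E_in_Comp w'_notin_Comp by auto

lemma w_ne_w': "w \<noteq> w'"
  using Comp_self w'_notin_Comp by metis

lemma inj_on_comps: "inj_on \<alpha> comps_except_w'"
proof (rule inj_onI)
  fix x y assume x: "x \<in> comps_except_w'" and y: "y \<in> comps_except_w'" and "\<alpha> x = \<alpha> y"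
  then have "x = y \<or> {x, y} = {w, w'}"
    using only_collision unfolding comps_except_w'_def by blast
  moreover have "{x, y} \<noteq> {w, w'}" using x y w'_notin_comps by auto
  ultimately show "x = y" by blast
qed

lemma Comp_subset_comps:
  assumes "c \<in> comps_except_w'"
  shows "Comp c \<subseteq> comps_except_w'"
proof (cases "c \<in> Comp w")
  case True
  then show ?thesis using Comp_subset unfolding comps_except_w'_def by blast
next
  case False
  then have "c \<in> Comp w'" and "c \<noteq> w'" using assms unfolding comps_except_w'_def by auto
  then have "Comp c \<subseteq> Comp w'" and "w' \<notin> Comp c" using Comp_subset Comp_antisym by auto
  then show ?thesis unfolding comps_except_w'_def by blast
qed

lemma comps_words: "c \<in> comps_except_w' \<Longrightarrow> vars c \<subseteq> {1..n}"
  unfolding comps_except_w'_def using vars_Comp w_words w'_words by (fastforce simp: words_over_def)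

lemma comps_reduced: "c \<in> comps_except_w' \<Longrightarrow> reduced lt c"
  unfolding comps_except_w'_def using reduced_Comp w_reduced w'_reduced by blast

lemma psi_vanishes_on_comps:
  assumes "\<And>c. c \<in> comps_except_w' \<Longrightarrow> g \<notin> node_gens \<alpha> one c" and "t \<in> comps_except_w'"
  shows "\<psi> t g = 0"
proof (rule psi_vanishes)
  show "vars t \<subseteq> {1..n}" using assms(2) comps_words by blast
  show "rdiv_free t" using assms(2) comps_reduced reduced_rdiv_free by blast
  show "\<forall>c\<in>Comp t. g \<notin> node_gens \<alpha> one c"
    using assms Comp_subset_comps by blast
qed

lemma comps_value_closed: "c \<in> comps_except_w' \<Longrightarrow> \<alpha> c \<in> C"
  using comps_words eval_closed by blast

lemma comps_words_over: "c \<in> comps_except_w' \<Longrightarrow> c \<in> words_over n"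
  using comps_words unfolding words_over_def by blast

lemma w'_not_forbidden: "\<not> forbidden lt w'"
  using w'_reduced by (rule reduced_not_forbidden)

lemma w'_vars: "vars w' \<subseteq> {1..n}" and w'_rdiv_free: "rdiv_free w'"
  using w'_words w'_reduced reduced_rdiv_free unfolding words_over_def by auto

lemma value_ne_one:
  assumes "c \<in> comps_except_w'" and "c \<noteq> E"
  shows "\<alpha> c \<noteq> one"
proof
  assume "\<alpha> c = one"
  then have "\<alpha> c = \<alpha> E" by simp
  then show False using inj_onD[OF inj_on_comps] assms E_in_comps by blast
qed

lemma args_in_comps:
  assumes "w' \<in> {Mul u v, LDiv u v}"
  shows "u \<in> comps_except_w'" and "v \<in> comps_except_w'"
proof -
  have "u \<in> Comp w'" "v \<in> Comp w'" "size u < size w'" "size v < size w'"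
    using assms Comp_self by auto
  then show "u \<in> comps_except_w'" and "v \<in> comps_except_w'"
    using proper_Comp_in_comps by auto
qed

lemma separates_Var:
  assumes "w' = Var k"
  shows "separates (GX k)"
proof -
  have "GX k \<notin> node_gens \<alpha> one c" if "c \<in> comps_except_w'" for c
  proof -
    have "c \<noteq> Var k" using that assms w'_notin_Comp unfolding comps_except_w'_def by auto
    then show ?thesis by (cases c) (auto simp: bracket_support)
  qed
  then have "\<psi> w (GX k) = 0" using psi_vanishes_on_comps w_in_comps by blast
  moreover have "\<psi> w' (GX k) = 1" using assms psi_Var by (simp add: basis_def)
  moreover have "valid_gen n C one (GX k)"
    using assms w'_words by (simp add: words_over_def valid_gen_def)
  ultimately show ?thesis unfolding separates_def by simp
qed

lemma Mul_generator_new: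
  assumes w': "w' = Mul u v" and c: "c \<in> comps_except_w'"
  shows "GP (Upair (\<alpha> u) (\<alpha> v)) \<notin> node_gens \<alpha> one c"
proof
  assume g: "GP (Upair (\<alpha> u) (\<alpha> v)) \<in> node_gens \<alpha> one c"
  have uv: "u \<in> comps_except_w'" "v \<in> comps_except_w'"
    using w' args_in_comps by auto
  have sub: "Comp c \<subseteq> comps_except_w'" using c by (rule Comp_subset_comps)
  show False
  proof (cases c)
    case (Mul p q)
    with sub have pq: "p \<in> comps_except_w'" "q \<in> comps_except_w'" using Comp_self by auto
    from g Mul have "Upair (\<alpha> p) (\<alpha> q) = Upair (\<alpha> u) (\<alpha> v)"
      by (simp add: bracket_support del: Upair_inject)
    then have "Upair p q = Upair u v" using Upair_inj_on[OF inj_on_comps] pq uv by simp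
    then consider "p = u" "q = v" | "p = v" "q = u" by auto
    then show False
    proof cases
      case 1
      then show False using Mul w' c w'_notin_comps by simp
    next
      case 2
      then have "\<alpha> c = \<alpha> w" using Mul w' same_value mult_commute comps_value_closed uv by simp
      then have "w = Mul v u" using inj_on_comps c w_in_comps Mul 2 by (metis inj_onD)
      then have "u = v"
        using reduced_Mul_swap[OF order] comps_words_over uv w_reduced w'_reduced w' by metis
      then show False using w_ne_w' w' \<open>w = Mul v u\<close> by simp
    qed
  next
    case (LDiv p q)
    with sub have pc: "p \<in> comps_except_w'" using Comp_self by auto
    from g LDiv have "Upair (\<alpha> p) (\<alpha> c) = Upair (\<alpha> u) (\<alpha> v)"
      by (simp add: bracket_support del: Upair_inject)
    then have "Upair p c = Upair u v" using Upair_inj_on[OF inj_on_comps] pc c uv by simp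
    then have "w' = Mul u (LDiv u q) \<or> w' = Mul (LDiv v q) v" using w' LDiv by auto
    then show False using w'_not_forbidden by (auto simp: forbidden_def)
  qed (use g in auto)
qed

lemma separates_Mul:
  assumes w': "w' = Mul u v"
  shows "separates (GP (Upair (\<alpha> u) (\<alpha> v)))" (is "separates ?g")
proof -
  have uv: "u \<in> comps_except_w'" "v \<in> comps_except_w'"
    using w' args_in_comps by auto
  have "u \<noteq> E" "v \<noteq> E" using w' w'_not_forbidden by (auto simp: forbidden_def)
  then have ne: "\<alpha> u \<noteq> one" "\<alpha> v \<noteq> one" using uv value_ne_one by auto
  have zero: "\<psi> t ?g = 0" if "t \<in> comps_except_w'" for t
    using psi_vanishes_on_comps Mul_generator_new w' that by blast
  have "\<psi> w' ?g = 1"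
    using psi_Mul w' w'_vars w'_rdiv_free zero uv bracket_at_own_generator[OF ne] by simp
  moreover have "valid_gen n C one ?g"
    using uv ne comps_value_closed unfolding valid_gen_def by blast
  ultimately show ?thesis using zero w_in_comps unfolding separates_def by simp
qed

lemma LDiv_generator_new:
  assumes w': "w' = LDiv u v" and c: "c \<in> comps_except_w'"
  shows "GP (Upair (\<alpha> u) (\<alpha> w)) \<notin> node_gens \<alpha> one c"
proof
  assume g: "GP (Upair (\<alpha> u) (\<alpha> w)) \<in> node_gens \<alpha> one c"
  have uv: "u \<in> comps_except_w'" "v \<in> comps_except_w'" using w' args_in_comps by auto
  have closed: "\<alpha> u \<in> C" "\<alpha> w \<in> C"
    using uv w_in_comps comps_value_closed by auto
  have prod: "m (\<alpha> u) (\<alpha> w) = \<alpha> v" "m (\<alpha> w) (\<alpha> u) = \<alpha> v"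
    using mult_eval_LDiv w'_vars w' same_value mult_commute[OF closed] by auto
  have sub: "Comp c \<subseteq> comps_except_w'" using c by (rule Comp_subset_comps)
  show False
  proof (cases c)
    case (Mul p q)
    with sub have pq: "p \<in> comps_except_w'" "q \<in> comps_except_w'" using Comp_self by auto
    from g Mul have "Upair (\<alpha> p) (\<alpha> q) = Upair (\<alpha> u) (\<alpha> w)"
      by (simp add: bracket_support del: Upair_inject)
    then have pq_eq: "Upair p q = Upair u w"
      using Upair_inj_on[OF inj_on_comps] pq uv w_in_comps by simp
    then have "\<alpha> c = \<alpha> v" using Mul prod by auto
    then have "c = v" using inj_onD[OF inj_on_comps] c uv by blast
    then have "w' = LDiv u (Mul u w) \<or> w' = LDiv u (Mul w u)" using w' Mul pq_eq by auto
    then show False using w'_not_forbidden by (auto simp: forbidden_def)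
  next
    case (LDiv p q)
    with sub have pq: "p \<in> comps_except_w'" "q \<in> comps_except_w'" using Comp_self by auto
    from g LDiv have "Upair (\<alpha> p) (\<alpha> c) = Upair (\<alpha> u) (\<alpha> w)"
      by (simp add: bracket_support del: Upair_inject)
    then have pc_eq: "Upair p c = Upair u w"
      using Upair_inj_on[OF inj_on_comps] pq c uv w_in_comps by simp
    have "m (\<alpha> p) (\<alpha> c) = \<alpha> q" using mult_eval_LDiv LDiv c comps_words by blast
    then have "\<alpha> q = \<alpha> v" using pc_eq prod by auto
    then have "q = v" using inj_onD[OF inj_on_comps] pq uv by blast
    then have "c = w' \<or> w' = LDiv (LDiv w v) v" using w' LDiv pc_eq by auto
    then show False using c w'_notin_comps w'_not_forbidden by (auto simp: forbidden_def)
  qed (use g in auto)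
qed

lemma separates_LDiv:
  assumes w': "w' = LDiv u v"
  shows "separates (GP (Upair (\<alpha> u) (\<alpha> w)))" (is "separates ?g")
proof -
  have uv: "u \<in> comps_except_w'" "v \<in> comps_except_w'" using w' args_in_comps by auto
  have "u \<noteq> E" using w' w'_not_forbidden by (auto simp: forbidden_def)
  then have u_ne: "\<alpha> u \<noteq> one" using uv value_ne_one by auto
  have w_ne: "\<alpha> w \<noteq> one"
  proof
    assume "\<alpha> w = one"
    then have "\<alpha> v = \<alpha> u"
      using mult_eval_LDiv w'_vars w' same_value mult_one_right comps_value_closed uv by metis
    then have "v = u" using inj_onD[OF inj_on_comps] uv by blast
    then show False using w' w'_not_forbidden by (auto simp: forbidden_def)
  qed
  have zero: "\<psi> t ?g = 0" if "t \<in> comps_except_w'" for t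
    using psi_vanishes_on_comps LDiv_generator_new w' that by blast
  have "\<psi> w' ?g = -1"
    using psi_LDiv w' w'_vars w'_rdiv_free zero uv same_value bracket_at_own_generator[OF u_ne w_ne]
    by simp
  moreover have "valid_gen n C one ?g"
    using uv w_in_comps u_ne w_ne comps_value_closed unfolding valid_gen_def by blast
  ultimately show ?thesis using zero w_in_comps unfolding separates_def by simp
qed

lemma separating_generator: "\<exists>g. separates g"
proof (cases w')
  case E
  then show ?thesis using w'_notin_Comp E_in_Comp by simp
next
  case (Var k)
  then show ?thesis using separates_Var by blast
next
  case (Mul u v)
  then show ?thesis using separates_Mul by blast
next
  case (LDiv u v)
  then show ?thesis using separates_LDiv by blast
next
  case (RDiv u v)
  then show ?thesis using w'_not_forbidden by (simp add: forbidden_def)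
qed

end

theorem mainTheorem9:
  fixes n :: nat
    and C :: "'l set" and m :: "'l \<Rightarrow> 'l \<Rightarrow> 'l" and one :: 'l
    and a :: "nat \<Rightarrow> 'l"
    and lt :: "word \<Rightarrow> word \<Rightarrow> bool"
    and w w' :: word
  assumes L: "comm_loop C m one"
    and a_in: "\<forall>i\<in>{1..n}. a i \<in> C"
    and alpha_surj: "C = eval C m one a ` words_over n"
    and ord: "strict_total_order_on (words_over n) lt"
    and w_W: "w \<in> words_over n" and w'_W: "w' \<in> words_over n"
    and w_red: "reduced lt w" and w'_red: "reduced lt w'"
    and i: "w' \<notin> Comp w"
    and ii: "eval C m one a w = eval C m one a w'"
    and iii: "\<forall>u\<in>Comp w \<union> Comp w'. \<forall>v\<in>Comp w \<union> Comp w'.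
                eval C m one a u = eval C m one a v \<longrightarrow> u = v \<or> {u, v} = {w, w'}"
  shows "\<exists>g. valid_gen n C one g \<and> psi n C m one a w g = 0 \<and> \<bar>psi n C m one a w' g\<bar> = 1"
proof -
  interpret reduced_pair C m one n a lt w w'
    using L a_in ord w_W w'_W w_red w'_red i ii iii by unfold_locales
  show ?thesis using separating_generator unfolding separates_def .
qed

end
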